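(* Let $n$ and $\ell$ be even positive integers. Then \[\max(n,\ell)\ge \binom{n}{2}-\left(\frac{n}{2}+k\right),\] where $k$ is the smallest nonnegative integer such that $\gcd(n-2k-1,\ell)=1$.
   Context: All graphs are finite and simple. Vertex labels lie in $\mathbb{Z}_\ell$ ($\ell\ge 2$). In the neighborhood Lights Out game on $G$, toggling a vertex $v$ adds $1$ (mod $\ell$) to the label of each vertex of the closed neighborhood $N[v]$; the game is won when all labels are $0$. $G$ is $N$-AW if the game can be won from every initial labeling. $\max(n,\ell)$ is the maximum number of edges of an $N$-AW graph on $n$ vertices. *)

theory Defs
  imports Main "HOL-Computational_Algebra.Primes"
begin

definition simple_graph :: "nat \<Rightarrow> nat set set \<Rightarrow> bool" where
  "simple_graph n E \<longleftrightarrow> (\<forall>e\<in>E. e \<subseteq> {0..<n} \<and> card e = 2)"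

definition closed_nbhd :: "nat set set \<Rightarrow> nat \<Rightarrow> nat set" where
  "closed_nbhd E v = insert v {u. {u, v} \<in> E}"

text \<open>Neighborhood Lights Out over Z_l: labels are integers taken modulo l; toggling
  vertex u (t u times) adds t u to each label in N[u]. The game is won when all
  labels are 0 mod l. N-AW: winnable from every initial labeling.\<close>
definition N_AW :: "nat \<Rightarrow> nat \<Rightarrow> nat set set \<Rightarrow> bool" where
  "N_AW l n E \<longleftrightarrow> (\<forall>a :: nat \<Rightarrow> int. \<exists>t :: nat \<Rightarrow> nat. \<forall>v<n.
      (a v + (\<Sum>u\<in>{0..<n}. if v \<in> closed_nbhd E u then int (t u) else 0)) mod int l = 0)"

text \<open>max(n,l): maximum number of edges of an N-AW graph on n vertices.\<close>
definition maxAW :: "nat \<Rightarrow> nat \<Rightarrow> nat" where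
  "maxAW n l = Max {card E | E. simple_graph n E \<and> N_AW l n E}"

end

theory Submission
  imports Defs "HOL-Number_Theory.Cong" "HOL-Library.FuncSet"
begin

(* The bound is attained by the complement G of the graph H on {0..<n} formed by the perfect
  matching {2i, 2i+1} and the star joining 0 to 2, 4, ..., 2k; G has C(n,2) - n/2 - k edges.
  The closed-neighbourhood matrix of G is J - A_H, so z lies in its kernel modulo l iff the
  H-neighbours of every vertex carry total weight S = sum z. The equations at the odd vertices,
  at 2, ..., 2k, at the other even vertices and at 0 force z = S c (mod l) for an explicit c with
  sum n - 2k, whence (n - 2k - 1) S = 0 (mod l). If gcd (n - 2k - 1, l) = 1 this gives S = 0 and
  z = 0; an injective linear map of the finite module (Z/l)^n is onto, so G is N-AW. The least
  such k is at most n/2 - 1 because n - 2 (n/2 - 1) - 1 = 1. *)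

lemma linear_cong_solvable_if_kernel_trivial:
  fixes M :: "nat \<Rightarrow> nat \<Rightarrow> int" and L :: int
  assumes "L > 0"
    and kernel: "\<And>z. \<forall>v<n. [(\<Sum>u\<in>{0..<n}. M v u * z u) = 0] (mod L)
      \<Longrightarrow> \<forall>u<n. [z u = 0] (mod L)"
  shows "\<exists>t :: nat \<Rightarrow> nat. \<forall>v<n. [a v + (\<Sum>u\<in>{0..<n}. M v u * int (t u)) = 0] (mod L)"
proof -
  define A where "A = PiE {0..<n} (\<lambda>_. {0..<L})"
  define F where "F x = restrict (\<lambda>v. (\<Sum>u\<in>{0..<n}. M v u * x u) mod L) {0..<n}" for x
  have "finite A"
    unfolding A_def by (intro finite_PiE) auto
  moreover have "F ` A \<subseteq> A"
    unfolding A_def F_def using \<open>L > 0\<close> by (auto simp: PiE_iff)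
  moreover have "inj_on F A"
  proof
    fix x y assume x: "x \<in> A" and y: "y \<in> A" and Fxy: "F x = F y"
    have "[(\<Sum>u\<in>{0..<n}. M v u * (x u - y u)) = 0] (mod L)" if "v < n" for v
    proof -
      have "[(\<Sum>u\<in>{0..<n}. M v u * x u) = (\<Sum>u\<in>{0..<n}. M v u * y u)] (mod L)"
        using that fun_cong[OF Fxy, of v] by (simp add: F_def cong_def)
      then show ?thesis
        by (simp add: right_diff_distrib sum_subtractf cong_iff_dvd_diff)
    qed
    then have "[x u = y u] (mod L)" if "u < n" for u
      using kernel[of "\<lambda>u. x u - y u"] that by (simp add: cong_iff_dvd_diff)
    moreover have "x u \<in> {0..<L}" "y u \<in> {0..<L}" if "u < n" for u
      using x y that unfolding A_def by auto
    ultimately have "x u = y u" if "u < n" for u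
      using that by (auto simp: cong_def)
    moreover have "x \<in> extensional {0..<n}" "y \<in> extensional {0..<n}"
      using x y unfolding A_def by (auto simp: PiE_def)
    ultimately show "x = y"
      by (intro extensionalityI) auto
  qed
  ultimately have "F ` A = A"
    by (rule endo_inj_surj)
  define b where "b = restrict (\<lambda>v. - a v mod L) {0..<n}"
  have "b \<in> A"
    unfolding A_def b_def using \<open>L > 0\<close> by (intro PiE_I) simp_all
  then have "b \<in> F ` A"
    using \<open>F ` A = A\<close> by simp
  then obtain x where x: "x \<in> A" "b = F x"
    by (rule imageE)
  define t where "t u = nat (x u)" for u
  have "int (t u) = x u" if "u \<in> {0..<n}" for u
    using x(1) that unfolding A_def t_def by auto
  then have t: "(\<Sum>u\<in>{0..<n}. M v u * int (t u)) = (\<Sum>u\<in>{0..<n}. M v u * x u)" for v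
    by simp
  have "[a v + (\<Sum>u\<in>{0..<n}. M v u * int (t u)) = 0] (mod L)" if "v < n" for v
  proof -
    have "[(\<Sum>u\<in>{0..<n}. M v u * x u) = - a v] (mod L)"
      using that fun_cong[OF x(2), of v] by (simp add: F_def b_def cong_def)
    then have "[a v + (\<Sum>u\<in>{0..<n}. M v u * int (t u)) = a v + - a v] (mod L)"
      unfolding t by (simp only: cong_add_lcancel)
    then show ?thesis
      by simp
  qed
  then show ?thesis
    by blast
qed

definition complement_graph :: "nat \<Rightarrow> nat set set \<Rightarrow> nat set set" where
  "complement_graph n H = {e. e \<subseteq> {0..<n} \<and> card e = 2} - H"

lemma simple_graph_complement_graph: "simple_graph n (complement_graph n H)"
  by (simp add: simple_graph_def complement_graph_def)

lemma card_two_subsets: "card {e. e \<subseteq> {0..<n} \<and> card e = 2} = n choose 2"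
  using n_subsets[of "{0..<n}" 2] by simp

lemma card_complement_graph:
  assumes "simple_graph n H"
  shows "card (complement_graph n H) = (n choose 2) - card H"
proof -
  have "H \<subseteq> {e. e \<subseteq> {0..<n} \<and> card e = 2}"
    using assms by (auto simp: simple_graph_def)
  moreover have "finite {e. e \<subseteq> {0..<n} \<and> card e = 2}"
    by (rule finite_subset[of _ "Pow {0..<n}"]) auto
  ultimately show ?thesis
    unfolding complement_graph_def
    by (simp add: card_Diff_subset finite_subset card_two_subsets)
qed

lemma mem_closed_nbhd_complement_graph:
  assumes "simple_graph n H" "u < n" "v < n"
  shows "v \<in> closed_nbhd (complement_graph n H) u \<longleftrightarrow> {u, v} \<notin> H"
  using assms
  by (cases "u = v") (auto simp: closed_nbhd_def complement_graph_def simple_graph_def insert_commute)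

lemma N_AW_complement_graph_if_kernel_trivial:
  assumes H: "simple_graph n H" and "l > 0"
    and kernel: "\<And>z. \<forall>v<n. [(\<Sum>u\<in>{u. {u, v} \<in> H}. z u) = (\<Sum>u\<in>{0..<n}. z u)] (mod int l)
      \<Longrightarrow> \<forall>u<n. [z u = 0] (mod int l)"
  shows "N_AW l n (complement_graph n H)"
proof -
  define M :: "nat \<Rightarrow> nat \<Rightarrow> int" where
    "M v u = (if v \<in> closed_nbhd (complement_graph n H) u then 1 else 0)" for v u
  have M_sum: "(\<Sum>u\<in>{0..<n}. M v u * z u) = (\<Sum>u\<in>{0..<n}. z u) - (\<Sum>u\<in>{u. {u, v} \<in> H}. z u)"
    if "v < n" for v and z :: "nat \<Rightarrow> int"
  proof -
    have "{u. {u, v} \<in> H} = {u \<in> {0..<n}. {u, v} \<in> H}"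
      using H by (auto simp: simple_graph_def)
    then have nbrs: "(\<Sum>u\<in>{0..<n}. if {u, v} \<in> H then z u else 0) = (\<Sum>u\<in>{u. {u, v} \<in> H}. z u)"
      by (simp only: sum.inter_filter[symmetric] finite_atLeastLessThan)
    have "(\<Sum>u\<in>{0..<n}. M v u * z u) = (\<Sum>u\<in>{0..<n}. z u - (if {u, v} \<in> H then z u else 0))"
      using that H by (intro sum.cong) (auto simp: M_def mem_closed_nbhd_complement_graph)
    then show ?thesis
      by (simp add: sum_subtractf nbrs)
  qed
  have "\<exists>t :: nat \<Rightarrow> nat. \<forall>v<n. [a v + (\<Sum>u\<in>{0..<n}. M v u * int (t u)) = 0] (mod int l)" for a
  proof (rule linear_cong_solvable_if_kernel_trivial)
    fix z :: "nat \<Rightarrow> int"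
    assume "\<forall>v<n. [(\<Sum>u\<in>{0..<n}. M v u * z u) = 0] (mod int l)"
    then have "\<forall>v<n. [(\<Sum>u\<in>{u. {u, v} \<in> H}. z u) = (\<Sum>u\<in>{0..<n}. z u)] (mod int l)"
      by (simp add: M_sum cong_iff_dvd_diff dvd_diff_commute)
    then show "\<forall>u<n. [z u = 0] (mod int l)"
      by (rule kernel)
  qed (use \<open>l > 0\<close> in simp)
  moreover have if_times: "(if P then 1 else 0) * x = (if P then x else 0)" for P and x :: int
    by simp
  ultimately show ?thesis
    unfolding N_AW_def by (simp add: M_def cong_def)
qed

lemma card_le_maxAW:
  assumes "simple_graph n E" "N_AW l n E"
  shows "card E \<le> maxAW n l"
proof -
  have "{card E | E. simple_graph n E \<and> N_AW l n E} \<subseteq> card ` Pow (Pow {0..<n})"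
    by (auto simp: simple_graph_def)
  then have "finite {card E | E. simple_graph n E \<and> N_AW l n E}"
    by (rule finite_subset) simp
  then show ?thesis
    unfolding maxAW_def using assms by (intro Max_ge) auto
qed

definition matching_star :: "nat \<Rightarrow> nat \<Rightarrow> nat set set" where
  "matching_star n k = (\<lambda>i. {2 * i, 2 * i + 1}) ` {..<n div 2} \<union> (\<lambda>i. {0, 2 * i}) ` {1..k}"

lemma simple_graph_matching_star:
  assumes "even n" "2 * k < n"
  shows "simple_graph n (matching_star n k)"
  using assms by (auto simp: simple_graph_def matching_star_def)

lemma card_matching_star:
  "card (matching_star n k) = n div 2 + k"
proof -
  have "inj_on (\<lambda>i. {2 * i, 2 * i + 1::nat}) {..<n div 2}" "inj_on (\<lambda>i. {0, 2 * i::nat}) {1..k}"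
    by (auto simp: inj_on_def doubleton_eq_iff)
  moreover have "(\<lambda>i. {2 * i, 2 * i + 1::nat}) ` {..<n div 2} \<inter> (\<lambda>i. {0, 2 * i}) ` {1..k} = {}"
    by (auto simp: doubleton_eq_iff)
  ultimately show ?thesis
    unfolding matching_star_def by (simp add: card_Un_disjoint card_image)
qed

lemma doubleton_mem_consecutive_pairs:
  fixes u v m :: nat
  shows "{u, v} \<in> (\<lambda>i. {2 * i, 2 * i + 1}) ` {..<m} \<longleftrightarrow>
    u = (if even v then v + 1 else v - 1) \<and> v div 2 < m"
proof
  assume "{u, v} \<in> (\<lambda>i. {2 * i, 2 * i + 1}) ` {..<m}"
  then obtain i where "i < m" "u = 2 * i \<and> v = 2 * i + 1 \<or> u = 2 * i + 1 \<and> v = 2 * i"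
    by (auto simp: doubleton_eq_iff)
  then show "u = (if even v then v + 1 else v - 1) \<and> v div 2 < m"
    by auto
next
  assume u: "u = (if even v then v + 1 else v - 1) \<and> v div 2 < m"
  show "{u, v} \<in> (\<lambda>i. {2 * i, 2 * i + 1}) ` {..<m}"
  proof (cases "even v")
    case True
    then obtain j where "v = 2 * j"
      by (rule evenE)
    then show ?thesis
      using u True by (auto simp: image_iff insert_commute)
  next
    case False
    then obtain j where "v = 2 * j + 1"
      by (rule oddE)
    then show ?thesis
      using u False by (auto simp: image_iff)
  qed
qed

lemma doubleton_mem_star:
  fixes u v :: nat
  shows "{u, v} \<in> (\<lambda>i. {0, 2 * i}) ` I \<longleftrightarrow>
    (u = 0 \<and> v \<in> (*) 2 ` I) \<or> (v = 0 \<and> u \<in> (*) 2 ` I)"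
  by (auto simp: image_iff doubleton_eq_iff)

lemma doubleton_mem_matching_star:
  assumes "even n"
  shows "{u, v} \<in> matching_star n k \<longleftrightarrow>
    (u = (if even v then v + 1 else v - 1) \<and> v < n) \<or>
    (u = 0 \<and> v \<in> (*) 2 ` {1..k}) \<or> (v = 0 \<and> u \<in> (*) 2 ` {1..k})"
proof -
  have "v div 2 < n div 2 \<longleftrightarrow> v < n"
    using assms by (auto elim!: evenE)
  then show ?thesis
    unfolding matching_star_def Un_iff doubleton_mem_consecutive_pairs doubleton_mem_star
    by simp
qed

lemma matching_star_nbrs_odd:
  assumes "even n" "odd v" "v < n"
  shows "{u. {u, v} \<in> matching_star n k} = {v - 1}"
  using assms by (auto simp: doubleton_mem_matching_star)

lemma matching_star_nbrs_even:
  assumes "even n" "even v" "0 < v" "v < n"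
  shows "{u. {u, v} \<in> matching_star n k} = (if v \<le> 2 * k then {v + 1, 0} else {v + 1})"
proof -
  have "v + 1 < n"
    using assms by (auto elim!: evenE)
  moreover have "v \<in> (*) 2 ` {1..k} \<longleftrightarrow> v \<le> 2 * k"
    using assms(2,3) by (auto elim!: evenE)
  ultimately show ?thesis
    using assms by (auto simp: doubleton_mem_matching_star)
qed

lemma matching_star_nbrs_zero:
  assumes "even n" "0 < n"
  shows "{u. {u, 0} \<in> matching_star n k} = insert 1 ((*) 2 ` {1..k})"
  using assms by (auto simp: doubleton_mem_matching_star)

definition matching_star_profile :: "nat \<Rightarrow> nat \<Rightarrow> int" where
  "matching_star_profile k u = (if u = 1 then 1 - int k else if odd u \<and> u \<le> 2 * k + 1 then 0 else 1)"

lemma sum_matching_star_profile: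
  assumes "even n" "2 * k < n"
  shows "(\<Sum>u\<in>{0..<n}. matching_star_profile k u) = int n - 2 * int k"
proof -
  define T where "T = (\<lambda>i. 2 * i + 1) ` {1..k}"
  have "2 * k + 1 < n"
    using assms by presburger
  then have T: "{u. u < n \<and> u \<in> T} = T" "card T = k"
    by (auto simp: T_def card_image inj_on_def)
  have "matching_star_profile k u = 1 - (if u \<in> T then 1 else 0) - (if u = 1 then int k else 0)" for u
    by (auto simp: matching_star_profile_def T_def elim!: oddE)
  then show ?thesis
    using \<open>2 * k + 1 < n\<close> T by (simp add: sum_subtractf sum.inter_filter[symmetric])
qed

lemma matching_star_kernel_profile:
  fixes z :: "nat \<Rightarrow> int"
  assumes "even n" "2 * k < n"
    and nbrs: "\<forall>v<n. [(\<Sum>u\<in>{u. {u, v} \<in> matching_star n k}. z u) = S] (mod L)"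
    and "u < n"
  shows "[z u = S * matching_star_profile k u] (mod L)"
proof -
  have even_z: "[z w = S] (mod L)" if "even w" "w < n" for w
  proof -
    have "w + 1 < n"
      using that \<open>even n\<close> by presburger
    moreover have "{x. {x, w + 1} \<in> matching_star n k} = {w}"
      using matching_star_nbrs_odd[OF \<open>even n\<close> _ \<open>w + 1 < n\<close>] \<open>even w\<close> by simp
    ultimately show ?thesis
      using nbrs by fastforce
  qed
  have odd_z: "[z (w + 1) + (if w \<le> 2 * k then z 0 else 0) = S] (mod L)"
    if "even w" "0 < w" "w + 1 < n" for w
  proof -
    have sum_eq: "(\<Sum>x\<in>{x. {x, w} \<in> matching_star n k}. z x) =
        z (w + 1) + (if w \<le> 2 * k then z 0 else 0)"
      using matching_star_nbrs_even[OF \<open>even n\<close> that(1,2)] that by simp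
    show ?thesis
      using nbrs[rule_format, of w] that unfolding sum_eq by simp
  qed
  have "even u \<or> u = 1 \<or> (u = (u - 1) + 1 \<and> even (u - 1) \<and> 0 < u - 1)"
    by presburger
  then consider "even u" | "u = 1" | w where "u = w + 1" "even w" "0 < w"
    by blast
  then show ?thesis
  proof cases
    case 1
    then have "u \<noteq> 1"
      by auto
    then show ?thesis
      using even_z[OF 1 \<open>u < n\<close>] 1 by (simp add: matching_star_profile_def)
  next
    case 2
    have "1 \<notin> (*) 2 ` {1..k}"
      by auto
    then have "(\<Sum>x\<in>{x. {x, 0} \<in> matching_star n k}. z x) = z 1 + (\<Sum>i\<in>{1..k}. z (2 * i))"
      using \<open>even n\<close> \<open>u < n\<close> by (simp add: matching_star_nbrs_zero sum.reindex inj_on_def)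
    then have "[z 1 + (\<Sum>i\<in>{1..k}. z (2 * i)) = S] (mod L)"
      using nbrs \<open>u < n\<close> by fastforce
    moreover have "[(\<Sum>i\<in>{1..k}. z (2 * i)) = (\<Sum>i\<in>{1..k}. S)] (mod L)"
      using \<open>2 * k < n\<close> by (intro cong_sum even_z) auto
    then have "[z 1 + (\<Sum>i\<in>{1..k}. z (2 * i)) = z 1 + int k * S] (mod L)"
      by (simp add: cong_add_lcancel)
    ultimately have "[z 1 + int k * S = S] (mod L)"
      using cong_sym cong_trans by blast
    then show ?thesis
      using \<open>u = 1\<close> by (simp add: matching_star_profile_def cong_iff_dvd_diff algebra_simps)
  next
    case (3 w)
    show ?thesis
    proof (cases "w \<le> 2 * k")
      case True
      then have "[z u + z 0 = S] (mod L)"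
        using odd_z[OF 3(2,3)] 3(1) \<open>u < n\<close> by simp
      moreover have "[z 0 = S] (mod L)"
        using even_z \<open>u < n\<close> by simp
      ultimately have "L dvd (z u + z 0 - S) - (z 0 - S)"
        unfolding cong_iff_dvd_diff by (rule dvd_diff)
      then show ?thesis
        using 3 True by (simp add: matching_star_profile_def cong_iff_dvd_diff)
    next
      case False
      then show ?thesis
        using odd_z[OF 3(2,3)] 3 \<open>u < n\<close> by (simp add: matching_star_profile_def)
    qed
  qed
qed

lemma matching_star_kernel_trivial:
  fixes z :: "nat \<Rightarrow> int"
  assumes "even n" "2 * k < n" and coprime: "coprime (int n - 2 * int k - 1) L"
    and nbrs: "\<forall>v<n. [(\<Sum>u\<in>{u. {u, v} \<in> matching_star n k}. z u) = (\<Sum>u\<in>{0..<n}. z u)] (mod L)"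
  shows "\<forall>u<n. [z u = 0] (mod L)"
proof -
  define S where "S = (\<Sum>u\<in>{0..<n}. z u)"
  have profile: "[z u = S * matching_star_profile k u] (mod L)" if "u < n" for u
    using matching_star_kernel_profile assms that unfolding S_def by blast
  have "[(\<Sum>u\<in>{0..<n}. z u) = (\<Sum>u\<in>{0..<n}. S * matching_star_profile k u)] (mod L)"
    using profile by (intro cong_sum) auto
  also have "(\<Sum>u\<in>{0..<n}. S * matching_star_profile k u) = S * (int n - 2 * int k)"
    by (simp add: sum_distrib_left[symmetric] sum_matching_star_profile assms)
  finally have "[S = S * (int n - 2 * int k)] (mod L)"
    by (simp add: S_def)
  then have "[(int n - 2 * int k - 1) * S = (int n - 2 * int k - 1) * 0] (mod L)"
    by (simp add: cong_iff_dvd_diff algebra_simps dvd_diff_commute)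
  then have "[S = 0] (mod L)"
    using coprime by (simp only: cong_mult_lcancel)
  then have "[S * matching_star_profile k u = 0] (mod L)" for u
    using cong_scalar_right by fastforce
  then show ?thesis
    using profile cong_trans by blast
qed

lemma least_coprime_offset:
  fixes n l :: nat
  assumes "even n" "n > 0"
  defines "K \<equiv> LEAST k::nat. gcd (int n - 2 * int k - 1) (int l) = 1"
  shows "coprime (int n - 2 * int K - 1) (int l)" and "2 * K < n"
proof -
  have witness: "int n - 2 * int (n div 2 - 1) - 1 = 1"
    using assms(1,2) by (auto elim!: evenE simp: of_nat_diff)
  have "gcd (int n - 2 * int (n div 2 - 1) - 1) (int l) = 1"
    unfolding witness by simp
  then have "coprime (int n - 2 * int K - 1) (int l)" and "K \<le> n div 2 - 1"
    unfolding K_def coprime_iff_gcd_eq_1 by (rule LeastI, rule Least_le)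
  then show "coprime (int n - 2 * int K - 1) (int l)" and "2 * K < n"
    using assms(1,2) by (auto elim!: evenE)
qed

theorem proposition4p5:
  fixes n l :: nat
  assumes "even n" "n > 0" "even l" "l > 0"
  shows "int (maxAW n l) \<ge>
    int (n choose 2) - (int n div 2 + int (LEAST k::nat. gcd (int n - 2 * int k - 1) (int l) = 1))"
proof -
  define K where "K = (LEAST k::nat. gcd (int n - 2 * int k - 1) (int l) = 1)"
  have coprime: "coprime (int n - 2 * int K - 1) (int l)" and "2 * K < n"
    using least_coprime_offset[OF assms(1,2)] unfolding K_def by blast+
  let ?H = "matching_star n K"
  have H: "simple_graph n ?H"
    using assms(1) \<open>2 * K < n\<close> by (rule simple_graph_matching_star)
  have "N_AW l n (complement_graph n ?H)"
    using H \<open>l > 0\<close> matching_star_kernel_trivial[OF assms(1) \<open>2 * K < n\<close> coprime]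
    by (rule N_AW_complement_graph_if_kernel_trivial)
  then have "card (complement_graph n ?H) \<le> maxAW n l"
    by (rule card_le_maxAW[OF simple_graph_complement_graph])
  moreover have "card (complement_graph n ?H) = (n choose 2) - (n div 2 + K)"
    using card_complement_graph[OF H] by (simp add: card_matching_star)
  ultimately show ?thesis
    unfolding K_def[symmetric] by (simp add: zdiv_int)
qed

end
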